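(* Let $G(\mathcal V,\mathcal E)$ be a finite simple directed graph with $n=|\mathcal V|\ge 2$ nodes and let $f\ge 0$ be an integer. Suppose that a correct Byzantine consensus algorithm tolerating up to $f$ Byzantine faulty nodes exists for $G(\mathcal V,\mathcal E)$. Then for every partition $L,C,R,F$ of $\mathcal V$ (some of $C,F$ possibly empty) such that $L$ and $R$ are both non-empty and $|F|\le f$, either $L\cup C\rightarrow R$ or $R\cup C\rightarrow L$.
   Context: Network model: $G(\mathcal V,\mathcal E)$ is a simple directed graph without self-loops; node $i$ can send messages directly to node $j$ if and only if $(i,j)\in\mathcal E$. The system is synchronous, links are reliable, FIFO and deliver each message exactly once within bounded time; the topology is known to all nodes. Each node has an input in $\{0,1\}$. Up to $f$ nodes may be Byzantine faulty: they may deviate arbitrarily from the algorithm, may collude, and know the whole execution state, the algorithm and the topology. An algorithm is a correct Byzantine consensus algorithm if, for every set of at most $f$ faulty nodes, every behavior of the faulty nodes and all inputs: (Agreement) all fault-free nodes output the same value; (Validity) the output of every fault-free node equals the input of some fault-free node; (Termination) every fault-free node eventually decides on an output. Notation: for disjoint sets $X,Y\subseteq\mathcal V$ with $Y$ non-empty, $X\rightarrow Y$ means $|\{i\in X : (i,j)\in\mathcal E \text{ for some } j\in Y\}|>f$, i.e. $X$ contains at least $f+1$ distinct incoming neighbors of $Y$; $X\not\rightarrow Y$ means this fails. Sets are considered disjoint if either is empty. *)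

theory Defs
  imports Main
begin

text \<open>In every round each node sends one message (of arbitrary type) to each node;
  it is delivered only along edges.\<close>

record ('v, 's, 'm) byz_alg =
  alg_init  :: "'v \<Rightarrow> bool \<Rightarrow> 's"
  alg_send  :: "'v \<Rightarrow> 's \<Rightarrow> 'v \<Rightarrow> 'm"
  alg_trans :: "'v \<Rightarrow> 's \<Rightarrow> ('v \<Rightarrow> 'm option) \<Rightarrow> 's"
  alg_out   :: "'v \<Rightarrow> 's \<Rightarrow> bool option"

text \<open>States after r rounds, with inputs x, faulty set F and Byzantine behaviour byz
  (byz r i j = message faulty node i sends to j in round r).\<close>
primrec exec_state ::
  "('v, 's, 'm) byz_alg \<Rightarrow> ('v \<times> 'v) set \<Rightarrow> ('v \<Rightarrow> bool) \<Rightarrow> 'v set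
     \<Rightarrow> (nat \<Rightarrow> 'v \<Rightarrow> 'v \<Rightarrow> 'm) \<Rightarrow> nat \<Rightarrow> 'v \<Rightarrow> 's" where
  "exec_state A E x F byz 0 = (\<lambda>i. alg_init A i (x i))"
| "exec_state A E x F byz (Suc r) =
     (\<lambda>i. alg_trans A i (exec_state A E x F byz r i)
            (\<lambda>k. if (k, i) \<in> E
                 then Some (if k \<in> F then byz r k i
                            else alg_send A k (exec_state A E x F byz r k) i)
                 else None))"

definition decides ::
  "('v, 's, 'm) byz_alg \<Rightarrow> ('v \<times> 'v) set \<Rightarrow> ('v \<Rightarrow> bool) \<Rightarrow> 'v set
     \<Rightarrow> (nat \<Rightarrow> 'v \<Rightarrow> 'v \<Rightarrow> 'm) \<Rightarrow> 'v \<Rightarrow> bool" where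
  "decides A E x F byz i \<longleftrightarrow> (\<exists>r. alg_out A i (exec_state A E x F byz r i) \<noteq> None)"

definition decision ::
  "('v, 's, 'm) byz_alg \<Rightarrow> ('v \<times> 'v) set \<Rightarrow> ('v \<Rightarrow> bool) \<Rightarrow> 'v set
     \<Rightarrow> (nat \<Rightarrow> 'v \<Rightarrow> 'v \<Rightarrow> 'm) \<Rightarrow> 'v \<Rightarrow> bool" where
  "decision A E x F byz i =
     the (alg_out A i (exec_state A E x F byz
            (LEAST r. alg_out A i (exec_state A E x F byz r i) \<noteq> None) i))"

definition correct_byz_consensus ::
  "'v set \<Rightarrow> ('v \<times> 'v) set \<Rightarrow> nat \<Rightarrow> ('v, 's, 'm) byz_alg \<Rightarrow> bool" where
  "correct_byz_consensus V E f A \<longleftrightarrow>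
     (\<forall>F x byz. F \<subseteq> V \<and> card F \<le> f \<longrightarrow>
        (\<forall>i\<in>V - F. decides A E x F byz i) \<and>
        (\<forall>i\<in>V - F. \<forall>j\<in>V - F. decision A E x F byz i = decision A E x F byz j) \<and>
        (\<forall>i\<in>V - F. \<exists>k\<in>V - F. decision A E x F byz i = x k))"

text \<open>X \<rightarrow> Y: X contains at least f+1 distinct incoming neighbours of Y.\<close>
definition reaches :: "('v \<times> 'v) set \<Rightarrow> nat \<Rightarrow> 'v set \<Rightarrow> 'v set \<Rightarrow> bool" where
  "reaches E f X Y \<longleftrightarrow> card {i \<in> X. \<exists>j\<in>Y. (i, j) \<in> E} > f"

definition simple_digraph :: "'v set \<Rightarrow> ('v \<times> 'v) set \<Rightarrow> bool" where
  "simple_digraph V E \<longleftrightarrow> finite V \<and> E \<subseteq> V \<times> V \<and> (\<forall>i. (i, i) \<notin> E)"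

end

theory Submission
  imports Defs
begin

text \<open>Suppose neither side is reached by f+1 nodes, so the in-neighbours of L outside L \<union> F
  form a set NL of at most f nodes, and likewise NR for R. Run three executions side by side:
  all inputs 0 with faulty set NL, all inputs 1 with faulty set NR, and inputs 1 exactly on R
  with faulty set F. In the first two, the faulty nodes behave as they would in the third; in the
  third, F shows L the first execution and R the second. Then L cannot tell the third execution
  from the first and R cannot tell it from the second, so by validity L decides 0 and R decides 1
  in the third execution, contradicting agreement.\<close>

definition sent ::
  "('v, 's, 'm) byz_alg \<Rightarrow> 'v set \<Rightarrow> ('v \<Rightarrow> 'v \<Rightarrow> 'm) \<Rightarrow> ('v \<Rightarrow> 's) \<Rightarrow> 'v \<Rightarrow> 'v \<Rightarrow> 'm" where
  "sent A F byz st k i = (if k \<in> F then byz k i else alg_send A k (st k) i)"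

definition round_step ::
  "('v, 's, 'm) byz_alg \<Rightarrow> ('v \<times> 'v) set \<Rightarrow> 'v set \<Rightarrow> ('v \<Rightarrow> 'v \<Rightarrow> 'm) \<Rightarrow> ('v \<Rightarrow> 's) \<Rightarrow> 'v \<Rightarrow> 's" where
  "round_step A E F byz st =
     (\<lambda>i. alg_trans A i (st i) (\<lambda>k. if (k, i) \<in> E then Some (sent A F byz st k i) else None))"

lemma exec_state_Suc_round_step:
  "exec_state A E x F byz (Suc r) = round_step A E F (byz r) (exec_state A E x F byz r)"
  unfolding round_step_def sent_def by simp

lemma round_step_eq_on:
  assumes "\<forall>i\<in>S. st i = st' i"
    and "\<And>k i. (k, i) \<in> E \<Longrightarrow> i \<in> S \<Longrightarrow> sent A F byz st k i = sent A F' byz' st' k i"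
  shows "\<forall>i\<in>S. round_step A E F byz st i = round_step A E F' byz' st' i"
proof
  fix i assume "i \<in> S"
  then have "(\<lambda>k. if (k, i) \<in> E then Some (sent A F byz st k i) else None)
           = (\<lambda>k. if (k, i) \<in> E then Some (sent A F' byz' st' k i) else None)"
    using assms(2) by auto
  with \<open>i \<in> S\<close> assms(1) show "round_step A E F byz st i = round_step A E F' byz' st' i"
    by (simp add: round_step_def)
qed

definition impersonate ::
  "('v, 's, 'm) byz_alg \<Rightarrow> ('w \<Rightarrow> 'v \<Rightarrow> 's) \<Rightarrow> ('v \<Rightarrow> 'w) \<Rightarrow> 'v \<Rightarrow> 'v \<Rightarrow> 'm" where
  "impersonate A st p k i = alg_send A k (st (p i) k) i"

text \<open>A family of executions indexed by worlds w, run in lockstep: in world w the faulty nodes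
  send to i what they would honestly send in world p w i. This is admissible Byzantine
  behaviour because the faulty nodes know the whole execution state.\<close>

primrec joint_state ::
  "('v, 's, 'm) byz_alg \<Rightarrow> ('v \<times> 'v) set \<Rightarrow> ('w \<Rightarrow> 'v \<Rightarrow> bool) \<Rightarrow> ('w \<Rightarrow> 'v set)
     \<Rightarrow> ('w \<Rightarrow> 'v \<Rightarrow> 'w) \<Rightarrow> nat \<Rightarrow> 'w \<Rightarrow> 'v \<Rightarrow> 's" where
  "joint_state A E x F p 0 = (\<lambda>w i. alg_init A i (x w i))"
| "joint_state A E x F p (Suc r) =
     (\<lambda>w. round_step A E (F w) (impersonate A (joint_state A E x F p r) (p w))
            (joint_state A E x F p r w))"

lemma exec_state_joint_state:
  "exec_state A E (x w) (F w) (\<lambda>r. impersonate A (joint_state A E x F p r) (p w)) r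
     = joint_state A E x F p r w"
  by (induction r) (simp_all add: exec_state_Suc_round_step del: exec_state.simps(2))

lemma joint_state_eq_on:
  assumes "\<forall>i\<in>S. x w i = x w' i"
    and "S \<inter> F w = {}" and "S \<inter> F w' = {}" and "F w \<inter> F w' = {}"
    and "\<And>k i. (k, i) \<in> E \<Longrightarrow> i \<in> S \<Longrightarrow> k \<in> S \<union> F w \<union> F w'"
    and "\<forall>i\<in>S. p w i = w' \<and> p w' i = w"
  shows "\<forall>i\<in>S. joint_state A E x F p r w i = joint_state A E x F p r w' i"
proof (induction r)
  case 0
  then show ?case using assms(1) by simp
next
  case (Suc r)
  let ?st = "joint_state A E x F p r"
  have "sent A (F w) (impersonate A ?st (p w)) (?st w) k i
      = sent A (F w') (impersonate A ?st (p w')) (?st w') k i"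
    if edge: "(k, i) \<in> E" and "i \<in> S" for k i
  proof -
    have "p w i = w'" and "p w' i = w" using assms(6) \<open>i \<in> S\<close> by auto
    consider "k \<in> S" | "k \<in> F w" | "k \<in> F w'" using assms(5)[OF edge \<open>i \<in> S\<close>] by blast
    then show ?thesis
    proof cases
      case 1
      then have "k \<notin> F w" "k \<notin> F w'" and "?st w k = ?st w' k"
        using assms(2,3) Suc by auto
      then show ?thesis by (simp add: sent_def)
    next
      case 2
      then have "k \<notin> F w'" using assms(4) by blast
      with 2 \<open>p w i = w'\<close> show ?thesis by (simp add: sent_def impersonate_def)
    next
      case 3
      then have "k \<notin> F w" using assms(4) by blast
      with 3 \<open>p w' i = w\<close> show ?thesis by (simp add: sent_def impersonate_def)
    qed
  qed
  then show ?case
    unfolding joint_state.simps by (rule round_step_eq_on[OF Suc])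
qed

lemma decision_eqI:
  assumes "\<And>r. exec_state A E x F byz r i = exec_state A E x' F' byz' r i"
  shows "decision A E x F byz i = decision A E x' F' byz' i"
  using assms by (simp add: decision_def)

lemma correct_byz_consensus_instance:
  assumes "correct_byz_consensus V E f A" and "F \<subseteq> V" and "card F \<le> f"
  shows "\<forall>i\<in>V - F. \<forall>j\<in>V - F. decision A E x F byz i = decision A E x F byz j"
    and "\<forall>i\<in>V - F. \<exists>k\<in>V - F. decision A E x F byz i = x k"
proof -
  note consensus = assms(1)[unfolded correct_byz_consensus_def, THEN spec[of _ F],
      THEN spec[of _ x], THEN spec[of _ byz], THEN mp, OF conjI[OF assms(2,3)]]
  from consensus show "\<forall>i\<in>V - F. \<forall>j\<in>V - F. decision A E x F byz i = decision A E x F byz j"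
    by (elim conjE)
  from consensus show "\<forall>i\<in>V - F. \<exists>k\<in>V - F. decision A E x F byz i = x k"
    by (elim conjE)
qed

datatype world = Mixed | Zeros | Ones

lemma separated_sides_not_correct_byz_consensus:
  assumes "L \<subseteq> V" and "R \<subseteq> V" and "L \<inter> R = {}" and "L \<noteq> {}" and "R \<noteq> {}"
    and "F \<subseteq> V" and "card F \<le> f" and "F \<inter> (L \<union> R) = {}"
    and "NL \<subseteq> V" and "card NL \<le> f" and "NL \<inter> (L \<union> F) = {}"
    and "NR \<subseteq> V" and "card NR \<le> f" and "NR \<inter> (R \<union> F) = {}"
    and "\<And>k i. (k, i) \<in> E \<Longrightarrow> i \<in> L \<Longrightarrow> k \<in> L \<union> F \<union> NL"
    and "\<And>k i. (k, i) \<in> E \<Longrightarrow> i \<in> R \<Longrightarrow> k \<in> R \<union> F \<union> NR"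
  shows "\<not> correct_byz_consensus V E f A"
proof
  assume cons: "correct_byz_consensus V E f A"
  define x where "x = (\<lambda>w i. case w of Mixed \<Rightarrow> i \<in> R | Zeros \<Rightarrow> False | Ones \<Rightarrow> True)"
  define Fw where "Fw = (\<lambda>w. case w of Mixed \<Rightarrow> F | Zeros \<Rightarrow> NL | Ones \<Rightarrow> NR)"
  define p where "p = (\<lambda>w i. case w of Mixed \<Rightarrow> if i \<in> L then Zeros else Ones | _ \<Rightarrow> Mixed)"
  have [simp]: "x Mixed = (\<lambda>i. i \<in> R)" "x Zeros = (\<lambda>_. False)" "x Ones = (\<lambda>_. True)"
    and [simp]: "Fw Mixed = F" "Fw Zeros = NL" "Fw Ones = NR"
    and [simp]: "p Mixed i = (if i \<in> L then Zeros else Ones)" "p Zeros i = Mixed" "p Ones i = Mixed"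
    for i by (simp_all add: x_def Fw_def p_def)
  define run where "run w = (\<lambda>r. impersonate A (joint_state A E x Fw p r) (p w))" for w
  have exec: "exec_state A E (x w) (Fw w) (run w) r = joint_state A E x Fw p r w" for w r
    unfolding run_def by (rule exec_state_joint_state)
  obtain l q where "l \<in> L" and "q \<in> R" using assms(4,5) by blast
  have "\<forall>i\<in>L. joint_state A E x Fw p r Mixed i = joint_state A E x Fw p r Zeros i" for r
    by (rule joint_state_eq_on) (use assms(3,8,11,15) in auto)
  with \<open>l \<in> L\<close> have "decision A E (\<lambda>i. i \<in> R) F (run Mixed) l
      = decision A E (\<lambda>_. False) NL (run Zeros) l"
    using exec[of Mixed] exec[of Zeros] by (intro decision_eqI) simp
  also have "\<dots> = False"
    using correct_byz_consensus_instance(2)[OF cons assms(9,10), of "\<lambda>_. False"]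
      \<open>l \<in> L\<close> assms(1,11)
    by auto
  finally have l_decides: "decision A E (\<lambda>i. i \<in> R) F (run Mixed) l = False" .
  have "\<forall>i\<in>R. joint_state A E x Fw p r Mixed i = joint_state A E x Fw p r Ones i" for r
    by (rule joint_state_eq_on) (use assms(3,8,14,16) in auto)
  with \<open>q \<in> R\<close> have "decision A E (\<lambda>i. i \<in> R) F (run Mixed) q
      = decision A E (\<lambda>_. True) NR (run Ones) q"
    using exec[of Mixed] exec[of Ones] by (intro decision_eqI) simp
  also have "\<dots> = True"
    using correct_byz_consensus_instance(2)[OF cons assms(12,13), of "\<lambda>_. True"]
      \<open>q \<in> R\<close> assms(2,14)
    by auto
  finally have q_decides: "decision A E (\<lambda>i. i \<in> R) F (run Mixed) q = True" .
  have "l \<in> V - F" "q \<in> V - F" using \<open>l \<in> L\<close> \<open>q \<in> R\<close> assms(1,2,8) by auto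
  then have "decision A E (\<lambda>i. i \<in> R) F (run Mixed) l
      = decision A E (\<lambda>i. i \<in> R) F (run Mixed) q"
    using correct_byz_consensus_instance(1)[OF cons assms(6,7)] by blast
  with l_decides q_decides show False by simp
qed

theorem theorem3:
  fixes V :: "'v set" and E :: "('v \<times> 'v) set" and f :: nat
    and A :: "('v, 's, 'm) byz_alg"
    and L C R F :: "'v set"
  assumes "simple_digraph V E"
    and "card V \<ge> 2"
    and "correct_byz_consensus V E f A"
    and "L \<union> C \<union> R \<union> F = V"
    and "L \<inter> C = {}" and "L \<inter> R = {}" and "L \<inter> F = {}"
    and "C \<inter> R = {}" and "C \<inter> F = {}" and "R \<inter> F = {}"
    and "L \<noteq> {}" and "R \<noteq> {}"
    and "card F \<le> f"
  shows "reaches E f (L \<union> C) R \<or> reaches E f (R \<union> C) L"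
proof (rule ccontr)
  assume neither: "\<not> (reaches E f (L \<union> C) R \<or> reaches E f (R \<union> C) L)"
  define NL where "NL = {i \<in> R \<union> C. \<exists>j\<in>L. (i, j) \<in> E}"
  define NR where "NR = {i \<in> L \<union> C. \<exists>j\<in>R. (i, j) \<in> E}"
  have "card NL \<le> f" and "card NR \<le> f"
    using neither by (auto simp: reaches_def NL_def NR_def)
  have "E \<subseteq> V \<times> V" using assms(1) by (simp add: simple_digraph_def)
  with assms(4) have in_L: "k \<in> L \<union> F \<union> NL" if "(k, i) \<in> E" and "i \<in> L" for k i
    using that unfolding NL_def by blast
  from \<open>E \<subseteq> V \<times> V\<close> assms(4)
  have in_R: "k \<in> R \<union> F \<union> NR" if "(k, i) \<in> E" and "i \<in> R" for k i
    using that unfolding NR_def by blast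
  have "NL \<subseteq> V" and "NL \<inter> (L \<union> F) = {}"
    using assms(4-10) unfolding NL_def by auto
  moreover have "NR \<subseteq> V" and "NR \<inter> (R \<union> F) = {}"
    using assms(4-10) unfolding NR_def by auto
  moreover have "L \<subseteq> V" "R \<subseteq> V" "F \<subseteq> V" and "F \<inter> (L \<union> R) = {}"
    using assms(4,7,10) by auto
  ultimately have "\<not> correct_byz_consensus V E f A"
    using separated_sides_not_correct_byz_consensus[of L V R F f NL NR E A]
      assms(6,11-13) \<open>card NL \<le> f\<close> \<open>card NR \<le> f\<close> in_L in_R
    by blast
  with assms(3) show False by simp
qed

end
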